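(* Let $v\ge 2$ be an integer and $\theta\in[0,1]$. In the tipsy cop and drunken robber game on the complete graph $K_v$ with cop and robber starting at distinct vertices, let $X$ be the capture time, i.e. the number of the move at which the capture occurs. Then \[ \mathbb{E}[X]=\frac{(2v-3)(v-1)}{(v-1)^2-\theta(v-2)^2}. \]
   Context: Tipsy cop and drunken robber game on a finite connected graph $G$: a cop and a robber are placed at distinct vertices. Moves are numbered $1,2,3,\dots$; the robber makes the odd-numbered moves and the cop the even-numbered moves, and on each move the mover must move to a vertex adjacent to its current vertex (staying put is not allowed). The robber always moves to a neighbor chosen uniformly at random. The cop, independently at each of her moves, with probability $\theta$ moves to a neighbor chosen uniformly at random, and with probability $1-\theta$ makes a directed move to a neighbor lying on a shortest path to the robber's current vertex (in particular onto the robber's vertex if it is adjacent). All random choices are independent. The robber is captured (and the game ends) as soon as both occupy the same vertex, whether the robber moves onto the cop or the cop moves onto the robber. *)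

theory Defs
  imports "HOL-Probability.Probability"
begin

text \<open>A graph is given by a vertex set V and a symmetric adjacency relation adj.
  Game states: Play c r (cop at c, robber at r, game still running) or
  Caught n (capture happened at move n; absorbing).\<close>

datatype 'a gstate = Play 'a 'a | Caught nat

definition nbrs :: "'a set \<Rightarrow> ('a \<Rightarrow> 'a \<Rightarrow> bool) \<Rightarrow> 'a \<Rightarrow> 'a set" where
  "nbrs V adj x = {y \<in> V. adj x y}"

fun reach :: "'a set \<Rightarrow> ('a \<Rightarrow> 'a \<Rightarrow> bool) \<Rightarrow> nat \<Rightarrow> 'a \<Rightarrow> 'a \<Rightarrow> bool" where
  "reach V adj 0 x y = (x = y)"
| "reach V adj (Suc n) x y = (\<exists>z\<in>nbrs V adj x. reach V adj n z y)"

definition gdist :: "'a set \<Rightarrow> ('a \<Rightarrow> 'a \<Rightarrow> bool) \<Rightarrow> 'a \<Rightarrow> 'a \<Rightarrow> nat" where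
  "gdist V adj x y = (LEAST n. reach V adj n x y)"

definition toward :: "'a set \<Rightarrow> ('a \<Rightarrow> 'a \<Rightarrow> bool) \<Rightarrow> 'a \<Rightarrow> 'a \<Rightarrow> 'a set" where
  "toward V adj c r = {w \<in> nbrs V adj c. gdist V adj w r + 1 = gdist V adj c r}"

definition game_step ::
  "'a set \<Rightarrow> ('a \<Rightarrow> 'a \<Rightarrow> bool) \<Rightarrow> real \<Rightarrow> nat \<Rightarrow> 'a gstate \<Rightarrow> 'a gstate pmf" where
  "game_step V adj \<theta> n s = (case s of
      Caught m \<Rightarrow> return_pmf (Caught m)
    | Play c r \<Rightarrow>
        (if odd n then
           map_pmf (\<lambda>r'. if r' = c then Caught n else Play c r') (pmf_of_set (nbrs V adj r))
         else
           bind_pmf (bernoulli_pmf \<theta>) (\<lambda>b.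
             map_pmf (\<lambda>c'. if c' = r then Caught n else Play c' r)
               (if b then pmf_of_set (nbrs V adj c) else pmf_of_set (toward V adj c r)))))"

fun game_dist ::
  "'a set \<Rightarrow> ('a \<Rightarrow> 'a \<Rightarrow> bool) \<Rightarrow> real \<Rightarrow> 'a \<Rightarrow> 'a \<Rightarrow> nat \<Rightarrow> 'a gstate pmf" where
  "game_dist V adj \<theta> c0 r0 0 = return_pmf (Play c0 r0)"
| "game_dist V adj \<theta> c0 r0 (Suc n) =
     bind_pmf (game_dist V adj \<theta> c0 r0 n) (game_step V adj \<theta> (Suc n))"

definition capture_prob ::
  "'a set \<Rightarrow> ('a \<Rightarrow> 'a \<Rightarrow> bool) \<Rightarrow> real \<Rightarrow> 'a \<Rightarrow> 'a \<Rightarrow> nat \<Rightarrow> real" where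
  "capture_prob V adj \<theta> c0 r0 n = pmf (game_dist V adj \<theta> c0 r0 n) (Caught n)"

definition Kv :: "nat \<Rightarrow> nat set" where "Kv v = {0..<v}"
definition Kadj :: "nat \<Rightarrow> nat \<Rightarrow> bool" where "Kadj x y = (x \<noteq> y)"

end

theory Submission
  imports Defs
begin

(* On K_v all live positions (cop and robber apart) look alike. A robber move captures exactly when
   the robber steps onto the cop, with probability p = 1/(v-1); a cop move captures unless the cop
   moves at random and misses, with probability q = \<theta>/(v-1) + 1 - \<theta>, because the directed move
   goes straight onto the robber. Hence P(X = 2k+1) = p s^k and P(X = 2k+2) = (1-p) q s^k with
   s = (1-p)(1-q), and the geometric series and its derivative give E[X] = (2-p)/(1-s). *)

lemma measure_bind_pmf:
  "measure_pmf.prob (bind_pmf M f) A = (\<integral>x. measure_pmf.prob (f x) A \<partial>measure_pmf M)"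
proof -
  have "measure_pmf.prob (bind_pmf M f) A = enn2real (emeasure (bind_pmf M f) A)"
    by (simp add: measure_def)
  also have "\<dots> = enn2real (\<integral>\<^sup>+x. ennreal (measure_pmf.prob (f x) A) \<partial>M)"
    by (subst emeasure_bind_pmf) (simp only: measure_pmf.emeasure_eq_measure)
  also have "\<dots> = (\<integral>x. measure_pmf.prob (f x) A \<partial>measure_pmf M)"
    by (subst nn_integral_eq_integral) (auto intro!: measure_pmf.integrable_const_bound[where B=1])
  finally show ?thesis .
qed

lemma measure_pmf_of_support:
  assumes "set_pmf M \<subseteq> insert x A" "x \<notin> A"
  shows "measure_pmf.prob M A = 1 - pmf M x"
proof -
  have "measure_pmf.prob M (insert x A) = 1"
    using assms(1) by (subst measure_pmf.prob_eq_1) (auto intro!: AE_pmfI)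
  moreover have "measure_pmf.prob M (insert x A) = pmf M x + measure_pmf.prob M A"
    using assms(2) measure_pmf.finite_measure_Union[where A="{x}" and B=A]
    by (simp add: measure_pmf_single)
  ultimately show ?thesis by simp
qed

lemma integral_pmf_eq_indicator:
  assumes "\<And>x. x \<in> set_pmf M \<Longrightarrow> f x = c * indicator A x"
  shows "(\<integral>x. f x \<partial>measure_pmf M) = c * measure_pmf.prob M A"
proof -
  have "(\<integral>x. f x \<partial>measure_pmf M) = (\<integral>x. c * indicator A x \<partial>measure_pmf M)"
    by (rule integral_cong_AE) (auto intro!: AE_pmfI simp: assms)
  then show ?thesis by simp
qed

lemma sums_even_odd:
  fixes f :: "nat \<Rightarrow> 'a::real_normed_vector"
  assumes "(\<lambda>k. f (2 * k)) sums a" and "(\<lambda>k. f (2 * k + 1)) sums b"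
  shows "f sums (a + b)"
proof -
  have "(\<lambda>n. if even n then f n else 0) sums a"
    using assms(1) by (subst sums_mono_reindex[of "\<lambda>k. 2 * k", symmetric]) (auto simp: strict_mono_def)
  moreover have "(\<lambda>n. if odd n then f n else 0) sums b"
    using assms(2) by (subst sums_mono_reindex[of "\<lambda>k. 2 * k + 1", symmetric])
      (auto simp: strict_mono_def elim!: oddE)
  ultimately have "(\<lambda>n. (if even n then f n else 0) + (if odd n then f n else 0)) sums (a + b)"
    by (rule sums_add)
  moreover have "(\<lambda>n. (if even n then f n else 0) + (if odd n then f n else 0)) = f"
    by auto
  ultimately show ?thesis
    by simp
qed

lemma prod_alternating:
  fixes f :: "nat \<Rightarrow> 'a::comm_monoid_mult"
  assumes "\<And>m. odd m \<Longrightarrow> f m = a" and "\<And>m. even m \<Longrightarrow> f m = b"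
  shows "(\<Prod>m\<in>{1..2 * k}. f m) = (a * b) ^ k"
proof (induction k)
  case 0
  show ?case by simp
next
  case (Suc k)
  have "(\<Prod>m\<in>{1..2 * Suc k}. f m) = (\<Prod>m\<in>{1..2 * k}. f m) * f (2 * k + 1) * f (2 * k + 2)"
    by (simp add: prod.cl_ivl_Suc)
  then show ?case
    using Suc.IH assms by (simp add: ac_simps)
qed

lemma alternating_geometric_sums:
  fixes p q :: real and f :: "nat \<Rightarrow> real"
  defines "s \<equiv> (1 - p) * (1 - q)"
  assumes s: "\<bar>s\<bar> < 1" and f0: "f 0 = 0"
    and f_odd: "\<And>k. f (2 * k + 1) = p * s ^ k"
    and f_even: "\<And>k. f (2 * k + 2) = (1 - p) * q * s ^ k"
  shows "f sums 1" and "(\<lambda>n. real n * f n) sums ((2 - p) / (1 - s))"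
proof -
  have geom: "(\<lambda>k. s ^ k) sums (1 / (1 - s))"
    using geometric_sums[of s] s by simp
  have geom_deriv: "(\<lambda>k. real (Suc k) * s ^ k) sums (1 / (1 - s)^2)"
    using geometric_deriv_sums[of s] s by simp
  have s_ne: "1 - s \<noteq> 0"
    using s by simp
  have mass: "(1 - p) * q = 1 - s - p"
    by (simp add: s_def algebra_simps)
  have "(\<lambda>n. f (Suc n)) sums (p * (1 / (1 - s)) + (1 - p) * q * (1 / (1 - s)))"
  proof (rule sums_even_odd)
    show "(\<lambda>k. f (Suc (2 * k))) sums (p * (1 / (1 - s)))"
      using f_odd by (simp only: Suc_eq_plus1) (intro sums_mult geom)
    show "(\<lambda>k. f (Suc (2 * k + 1))) sums ((1 - p) * q * (1 / (1 - s)))"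
      using f_even by (simp only: Suc_eq_plus1 add.assoc one_add_one) (intro sums_mult geom)
  qed
  also have "p * (1 / (1 - s)) + (1 - p) * q * (1 / (1 - s)) = 1"
    unfolding mass using s_ne by (simp add: divide_simps)
  finally show "f sums 1"
    using sums_Suc_iff[of f 1] f0 by simp
  have "(\<lambda>n. real (Suc n) * f (Suc n)) sums
      (p * (2 * (1 / (1 - s)^2) - 1 / (1 - s)) + 2 * ((1 - p) * q) * (1 / (1 - s)^2))"
  proof (rule sums_even_odd)
    have "real (Suc (2 * k)) * f (Suc (2 * k)) = p * (2 * (real (Suc k) * s ^ k) - s ^ k)" for k
      using f_odd[of k] by (simp add: algebra_simps)
    then show "(\<lambda>k. real (Suc (2 * k)) * f (Suc (2 * k)))
        sums (p * (2 * (1 / (1 - s)^2) - 1 / (1 - s)))"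
      by (simp only:) (intro sums_mult sums_diff geom geom_deriv)
    have "real (Suc (2 * k + 1)) * f (Suc (2 * k + 1))
        = 2 * ((1 - p) * q) * (real (Suc k) * s ^ k)" for k
      unfolding Suc_eq_plus1 add.assoc one_add_one f_even by (simp add: algebra_simps)
    then show "(\<lambda>k. real (Suc (2 * k + 1)) * f (Suc (2 * k + 1)))
        sums (2 * ((1 - p) * q) * (1 / (1 - s)^2))"
      by (simp only:) (intro sums_mult geom_deriv)
  qed
  also have "p * (2 * (1 / (1 - s)^2) - 1 / (1 - s)) + 2 * ((1 - p) * q) * (1 / (1 - s)^2)
      = (2 - p) / (1 - s)"
    unfolding mass using s_ne by (simp add: divide_simps power2_eq_square) (simp add: algebra_simps)
  finally show "(\<lambda>n. real n * f n) sums ((2 - p) / (1 - s))"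
    using sums_Suc_iff[of "\<lambda>n. real n * f n"] f0 by simp
qed

lemma game_step_Caught [simp]: "game_step V adj \<theta> m (Caught k) = return_pmf (Caught k)"
  by (simp add: game_step_def)

lemma capture_prob_0 [simp]: "capture_prob V adj \<theta> c0 r0 0 = 0"
  by (simp add: capture_prob_def)

locale homogeneous_capture =
  fixes V :: "'a set" and adj :: "'a \<Rightarrow> 'a \<Rightarrow> bool" and \<theta> :: real
    and L :: "'a gstate set" and h :: "nat \<Rightarrow> real"
  assumes Caught_notin_live: "Caught k \<notin> L"
    and pmf_capture_live: "s \<in> L \<Longrightarrow> pmf (game_step V adj \<theta> m s) (Caught m) = h m"
    and set_game_step_live: "s \<in> L \<Longrightarrow> set_pmf (game_step V adj \<theta> m s) \<subseteq> insert (Caught m) L"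
begin

lemma set_game_dist:
  assumes "Play c0 r0 \<in> L"
  shows "set_pmf (game_dist V adj \<theta> c0 r0 n) \<subseteq> L \<union> Caught ` {..n}"
proof (induction n)
  case 0
  show ?case using assms by simp
next
  case (Suc n)
  have "set_pmf (game_step V adj \<theta> (Suc n) s) \<subseteq> L \<union> Caught ` {..Suc n}"
    if "s \<in> set_pmf (game_dist V adj \<theta> c0 r0 n)" for s
  proof (cases "s \<in> L")
    case True
    then show ?thesis using set_game_step_live[of s "Suc n"] by auto
  next
    case False
    then show ?thesis using that Suc.IH by auto
  qed
  then show ?case by auto
qed

lemma game_dist_not_live:
  assumes "Play c0 r0 \<in> L" and "s \<in> set_pmf (game_dist V adj \<theta> c0 r0 n)" and "s \<notin> L"
  obtains k where "k \<le> n" and "s = Caught k"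
  using set_game_dist[OF assms(1), of n] assms(2,3) by auto

lemma pmf_capture_game_dist:
  assumes "Play c0 r0 \<in> L" and "s \<in> set_pmf (game_dist V adj \<theta> c0 r0 n)"
  shows "pmf (game_step V adj \<theta> (Suc n) s) (Caught (Suc n)) = h (Suc n) * indicator L s"
  by (cases "s \<in> L") (auto simp: pmf_capture_live elim: game_dist_not_live[OF assms])

lemma measure_live_game_step:
  assumes "Play c0 r0 \<in> L" and "s \<in> set_pmf (game_dist V adj \<theta> c0 r0 n)"
  shows "measure_pmf.prob (game_step V adj \<theta> (Suc n) s) L = (1 - h (Suc n)) * indicator L s"
proof (cases "s \<in> L")
  case True
  then show ?thesis
    using measure_pmf_of_support[OF set_game_step_live[OF True] Caught_notin_live]
    by (simp add: pmf_capture_live)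
next
  case False
  then show ?thesis
    by (auto simp: Caught_notin_live elim: game_dist_not_live[OF assms])
qed

lemma survival_game_dist:
  assumes "Play c0 r0 \<in> L"
  shows "measure_pmf.prob (game_dist V adj \<theta> c0 r0 n) L = (\<Prod>m\<in>{1..n}. 1 - h m)"
proof (induction n)
  case 0
  show ?case using assms by (simp add: measure_return)
next
  case (Suc n)
  have "measure_pmf.prob (game_dist V adj \<theta> c0 r0 (Suc n)) L
      = (1 - h (Suc n)) * measure_pmf.prob (game_dist V adj \<theta> c0 r0 n) L"
    by (simp add: measure_bind_pmf integral_pmf_eq_indicator measure_live_game_step[OF assms])
  then show ?case by (simp add: Suc.IH prod.cl_ivl_Suc)
qed

lemma capture_prob_Suc:
  assumes "Play c0 r0 \<in> L"
  shows "capture_prob V adj \<theta> c0 r0 (Suc n) = h (Suc n) * (\<Prod>m\<in>{1..n}. 1 - h m)"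
proof -
  have "capture_prob V adj \<theta> c0 r0 (Suc n)
      = h (Suc n) * measure_pmf.prob (game_dist V adj \<theta> c0 r0 n) L"
    by (simp add: capture_prob_def pmf_bind integral_pmf_eq_indicator
        pmf_capture_game_dist[OF assms])
  then show ?thesis by (simp add: survival_game_dist[OF assms])
qed

end

lemma nbrs_Kv: "nbrs (Kv v) Kadj x = {0..<v} - {x}"
  by (auto simp: nbrs_def Kv_def Kadj_def)

lemma gdist_self [simp]: "gdist V adj x x = 0"
  by (simp add: gdist_def)

lemma gdist_Kv:
  assumes "x \<noteq> y" and "y < v"
  shows "gdist (Kv v) Kadj x y = 1"
  unfolding gdist_def
proof (rule Least_equality)
  show "reach (Kv v) Kadj 1 x y" using assms by (simp add: nbrs_Kv)
next
  show "1 \<le> n" if "reach (Kv v) Kadj n x y" for n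
    using that assms by (cases n) auto
qed

lemma toward_Kv:
  assumes "c \<noteq> r" and "r < v"
  shows "toward (Kv v) Kadj c r = {r}"
proof -
  have "gdist (Kv v) Kadj w r = (if w = r then 0 else 1)" for w
    using assms by (simp add: gdist_Kv)
  then show ?thesis
    using assms by (auto simp: toward_def nbrs_Kv gdist_Kv)
qed

definition Kv_live :: "nat \<Rightarrow> nat gstate set" where
  "Kv_live v = {Play c r | c r. c < v \<and> r < v \<and> c \<noteq> r}"

definition Kv_hazard :: "nat \<Rightarrow> real \<Rightarrow> nat \<Rightarrow> real" where
  "Kv_hazard v \<theta> m = (if odd m then 1 / (real v - 1) else \<theta> / (real v - 1) + (1 - \<theta>))"

lemma pmf_of_set_remove_atLeastLessThan:
  assumes "v \<ge> 2" and "x < v"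
  shows "set_pmf (pmf_of_set ({0..<v} - {x})) = {0..<v} - {x}"
    and "y < v \<Longrightarrow> y \<noteq> x \<Longrightarrow> pmf (pmf_of_set ({0..<v} - {x})) y = 1 / (real v - 1)"
proof -
  have "(if x = 0 then 1 else 0) \<in> {0..<v} - {x}"
    using assms by auto
  then have ne: "{0..<v} - {x} \<noteq> {}"
    by blast
  then show "set_pmf (pmf_of_set ({0..<v} - {x})) = {0..<v} - {x}"
    by simp
  show "pmf (pmf_of_set ({0..<v} - {x})) y = 1 / (real v - 1)" if "y < v" "y \<noteq> x"
  proof -
    have "card ({0..<v} - {x}) = v - 1"
      using assms by simp
    then show ?thesis
      using ne that assms by (simp add: of_nat_diff)
  qed
qed

lemma game_step_Kv_live:
  assumes v: "v \<ge> 2" and \<theta>: "0 \<le> \<theta>" "\<theta> \<le> 1" and s: "s \<in> Kv_live v"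
  shows "pmf (game_step (Kv v) Kadj \<theta> m s) (Caught m) = Kv_hazard v \<theta> m"
    and "set_pmf (game_step (Kv v) Kadj \<theta> m s) \<subseteq> insert (Caught m) (Kv_live v)"
proof -
  obtain c r where s: "s = Play c r" and cr: "c < v" "r < v" "c \<noteq> r"
    using s by (auto simp: Kv_live_def)
  have "pmf (game_step (Kv v) Kadj \<theta> m s) (Caught m) = Kv_hazard v \<theta> m
      \<and> set_pmf (game_step (Kv v) Kadj \<theta> m s) \<subseteq> insert (Caught m) (Kv_live v)"
  proof (cases "odd m")
    case True
    let ?g = "\<lambda>r'. if r' = c then Caught m else Play c r'"
    have step: "game_step (Kv v) Kadj \<theta> m s = map_pmf ?g (pmf_of_set ({0..<v} - {r}))"
      using True by (simp add: game_step_def s nbrs_Kv)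
    have "pmf (map_pmf ?g (pmf_of_set ({0..<v} - {r}))) (Caught m)
        = pmf (pmf_of_set ({0..<v} - {r})) c"
      by (simp add: pmf_map measure_pmf_single vimage_def)
    moreover have "set_pmf (map_pmf ?g (pmf_of_set ({0..<v} - {r})))
        \<subseteq> insert (Caught m) (Kv_live v)"
      using cr pmf_of_set_remove_atLeastLessThan(1)[OF v cr(2)] by (auto simp: Kv_live_def)
    ultimately show ?thesis
      using True cr pmf_of_set_remove_atLeastLessThan(2)[OF v cr(2)] by (simp add: step Kv_hazard_def)
  next
    case False
    let ?g = "\<lambda>c'. if c' = r then Caught m else Play c' r"
    let ?f = "\<lambda>b. map_pmf ?g (if b then pmf_of_set ({0..<v} - {c}) else return_pmf r)"
    have step: "game_step (Kv v) Kadj \<theta> m s = bernoulli_pmf \<theta> \<bind> ?f"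
      using False cr
      by (simp add: game_step_def s nbrs_Kv toward_Kv pmf_of_set_singleton cong: if_cong)
    have "pmf (bernoulli_pmf \<theta> \<bind> ?f) (Caught m)
        = \<theta> * pmf (pmf_of_set ({0..<v} - {c})) r + (1 - \<theta>)"
      using \<theta> by (simp add: pmf_bind pmf_map measure_pmf_single vimage_def)
    moreover have "set_pmf (bernoulli_pmf \<theta> \<bind> ?f) \<subseteq> insert (Caught m) (Kv_live v)"
      using cr pmf_of_set_remove_atLeastLessThan(1)[OF v cr(1)] by (auto simp: Kv_live_def split: if_splits)
    ultimately show ?thesis
      using False cr pmf_of_set_remove_atLeastLessThan(2)[OF v cr(1)] by (simp add: step Kv_hazard_def)
  qed
  then show "pmf (game_step (Kv v) Kadj \<theta> m s) (Caught m) = Kv_hazard v \<theta> m"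
    and "set_pmf (game_step (Kv v) Kadj \<theta> m s) \<subseteq> insert (Caught m) (Kv_live v)"
    by simp_all
qed

lemma homogeneous_capture_Kv:
  assumes "v \<ge> 2" and "0 \<le> \<theta>" and "\<theta> \<le> 1"
  shows "homogeneous_capture (Kv v) Kadj \<theta> (Kv_live v) (Kv_hazard v \<theta>)"
  using game_step_Kv_live[OF assms] by unfold_locales (auto simp: Kv_live_def)

lemma Kv_geometric_parameters:
  fixes \<theta> :: real
  assumes v: "v \<ge> 2" and \<theta>: "0 \<le> \<theta>" "\<theta> \<le> 1"
  defines "p \<equiv> 1 / (real v - 1)" and "q \<equiv> \<theta> / (real v - 1) + (1 - \<theta>)"
  shows "\<bar>(1 - p) * (1 - q)\<bar> < 1"
    and "(2 - p) / (1 - (1 - p) * (1 - q))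
      = (2 * real v - 3) * (real v - 1) / ((real v - 1)^2 - \<theta> * (real v - 2)^2)"
proof -
  define w where "w = real v - 1"
  have w: "w \<ge> 1"
    using v by (simp add: w_def)
  have p: "p = 1 / w" and q: "1 - q = \<theta> * (1 - p)"
    by (simp_all add: p_def q_def w_def algebra_simps)
  have p_bounds: "0 \<le> 1 - p" "1 - p < 1"
    using w by (simp_all add: p field_simps)
  then have "1 - q \<le> 1"
    using \<theta> by (simp add: q mult_le_one)
  then have "(1 - p) * (1 - q) \<le> 1 - p"
    using p_bounds(1) by (rule mult_left_le)
  moreover have "0 \<le> (1 - p) * (1 - q)"
    using p_bounds(1) \<theta> by (simp add: q)
  ultimately show "\<bar>(1 - p) * (1 - q)\<bar> < 1"
    using p_bounds(2) by simp
  have "\<theta> * (w - 1)^2 \<le> (w - 1)^2"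
    using \<theta> by (simp add: mult_left_le_one_le)
  moreover have "(w - 1)^2 < w^2"
    using w by (simp add: power2_eq_square algebra_simps)
  ultimately have den: "w^2 - \<theta> * (w - 1)^2 \<noteq> 0"
    by linarith
  have "1 - (1 - p) * (1 - q) = (w^2 - \<theta> * (w - 1)^2) / w^2"
    unfolding q p using w by (simp add: field_simps power2_eq_square)
  moreover have "2 - p = (2 * w - 1) / w"
    unfolding p using w by (simp add: field_simps)
  ultimately have "(2 - p) / (1 - (1 - p) * (1 - q))
      = (2 * w - 1) * w / (w^2 - \<theta> * (w - 1)^2)"
    using w den by (simp add: power2_eq_square)
  also have "\<dots> = (2 * real v - 3) * (real v - 1) / ((real v - 1)^2 - \<theta> * (real v - 2)^2)"
    by (simp add: w_def algebra_simps)
  finally show "(2 - p) / (1 - (1 - p) * (1 - q))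
      = (2 * real v - 3) * (real v - 1) / ((real v - 1)^2 - \<theta> * (real v - 2)^2)" .
qed

theorem mainTheorem2:
  fixes v :: nat and \<theta> :: real and c0 r0 :: nat
  assumes "v \<ge> 2" and "0 \<le> \<theta>" and "\<theta> \<le> 1"
    and "c0 \<in> Kv v" and "r0 \<in> Kv v" and "c0 \<noteq> r0"
  shows "(\<lambda>n. capture_prob (Kv v) Kadj \<theta> c0 r0 n) sums 1
    \<and> (\<lambda>n. real n * capture_prob (Kv v) Kadj \<theta> c0 r0 n) sums
        ((2 * real v - 3) * (real v - 1) / ((real v - 1)^2 - \<theta> * (real v - 2)^2))"
proof -
  have live: "Play c0 r0 \<in> Kv_live v"
    using assms by (auto simp: Kv_def Kv_live_def)
  define p where "p = 1 / (real v - 1)"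
  define q where "q = \<theta> / (real v - 1) + (1 - \<theta>)"
  define s where "s = (1 - p) * (1 - q)"
  have hazard: "Kv_hazard v \<theta> m = (if odd m then p else q)" for m
    by (simp add: Kv_hazard_def p_def q_def)
  have survival: "(\<Prod>m\<in>{1..2 * k}. 1 - Kv_hazard v \<theta> m) = s ^ k" for k
    unfolding s_def by (rule prod_alternating) (simp_all add: hazard)
  note capture =
    homogeneous_capture.capture_prob_Suc[OF homogeneous_capture_Kv[OF assms(1-3)] live]
  have "capture_prob (Kv v) Kadj \<theta> c0 r0 (2 * k + 1) = p * s ^ k" for k
    using capture[of "2 * k", unfolded survival] by (simp add: hazard)
  moreover have "capture_prob (Kv v) Kadj \<theta> c0 r0 (2 * k + 2) = (1 - p) * q * s ^ k" for k
    using capture[of "Suc (2 * k)", unfolded prod.cl_ivl_Suc survival] by (simp add: hazard)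
  ultimately show ?thesis
    using alternating_geometric_sums[of p q "capture_prob (Kv v) Kadj \<theta> c0 r0"]
      Kv_geometric_parameters[OF assms(1-3)]
    unfolding s_def p_def q_def by simp
qed

end
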